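(* Let $F(x)=\sum_{n\ge 1} f(n)x^n$ be a formal power series with $f(1)=1$ and composita $F^{\Delta}(n,k)$, and let $A(x)=\sum_{n\ge 1}a(n)x^n$ be its reverse series, i.e. $F(A(x))=x$. Then $a(1)=1$ and for $n>1$ $$a(n)=\frac{1}{n}\sum_{k=1}^{n-1}\binom{n+k-1}{n-1}\sum_{j=1}^{k}(-1)^j\binom{k}{j}F^{\Delta}(n+j-1,j).$$
   Context: All generating functions are formal power series in $x$. For a power series $F(x)=\sum_{n\ge 1} f(n)x^n$ with zero constant term, its composita is the two-variable function $F^{\Delta}(n,k)$ ($n\ge k\ge 1$) defined by $F^{\Delta}(n,k)=\sum_{\lambda_1+\cdots+\lambda_k=n}f(\lambda_1)f(\lambda_2)\cdots f(\lambda_k)$, where the sum runs over all compositions of $n$ into exactly $k$ positive integer parts; equivalently $[F(x)]^k=\sum_{n\ge k}F^{\Delta}(n,k)x^n$. *)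

theory Defs
  imports "HOL-Computational_Algebra.Formal_Power_Series"
begin

definition compositions :: "nat \<Rightarrow> nat \<Rightarrow> nat list set" where
  "compositions n k = {xs. length xs = k \<and> (\<forall>x\<in>set xs. 0 < x) \<and> sum_list xs = n}"

definition composita :: "'a::comm_semiring_1 fps \<Rightarrow> nat \<Rightarrow> nat \<Rightarrow> 'a" where
  "composita F n k = (\<Sum>xs\<in>compositions n k. \<Prod>i<length xs. fps_nth F (xs ! i))"

end

theory Submission
  imports Defs "HOL-Computational_Algebra.Formal_Laurent_Series"
begin

(* Write F = X * Fs, where Fs = fps_shift 1 F has constant term F(1) = 1.
   (1) Lagrange inversion, proved with formal residues of Laurent series: for the
       reverse series A of F and n >= 1,  n * a(n) = [x^(n-1)] Fs(x)^(-n).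
       The residue of A^(-n) * (H o A) * A' picks out the coefficient H(n-1), because
       res(A^(-k) A') is 1 for k = 1 and 0 for k >= 2 (then A^(-k) A' is a derivative).
   (2) Expansion of Fs^(-n) = (1 - (1 - Fs))^(-n) by the negative binomial series:
       [x^m] Fs^(-n) = sum_k C(n+k-1,k) [x^m] (1 - Fs)^k.
   (3) The composita is the coefficient sequence of the powers of F, so
       [x^m] Fs^j = F^Delta(m+j, j), and expanding (1 - Fs)^k binomially gives
       [x^m] (1 - Fs)^k = sum_j (-1)^j C(k,j) F^Delta(m+j, j).
   The corollary combines (1)-(3) with m = n - 1 and discards the vanishing terms
   k = 0 and j = 0. *)

section \<open>Residues and Lagrange inversion\<close>

(* For a series a of order exactly one, res(a^(-k) a') = [k = 1]: for k >= 2 the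
   product is the derivative of a^(-(k-1)) / (1-k), whose residue vanishes. *)
lemma fls_residue_inverse_power_times_deriv:
  fixes a :: "'a::field_char_0 fls"
  assumes "fls_subdegree a = 1" and "k \<ge> 1"
  shows "fls_residue (inverse a ^ k * fls_deriv a) = (if k = 1 then 1 else 0)"
proof (cases "k = 1")
  case True
  then show ?thesis using fls_residue_deriv_times_inverse_eq_subdegree(2)[of a] assms by simp
next
  case False
  define j where "j = k - 2"
  have k: "k = Suc (Suc j)" using False assms(2) unfolding j_def by simp
  have "fls_deriv (inverse a ^ Suc j) = of_nat (Suc j) * inverse a ^ j * (- fls_deriv a * (inverse a)\<^sup>2)"
    by (simp only: fls_deriv_power diff_Suc_1 fls_inverse_deriv)
  also have "\<dots> = - of_nat (Suc j) * (inverse a ^ k * fls_deriv a)"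
    by (simp add: k power2_eq_square algebra_simps)
  also have "\<dots> = fls_const (- of_nat (Suc j)) * (inverse a ^ k * fls_deriv a)"
    by (simp only: fls_of_nat fls_const_uminus[symmetric] mult_minus_left)
  finally have "fls_residue (fls_const (- of_nat (Suc j)) * (inverse a ^ k * fls_deriv a)) = 0"
    by (metis fls_residue_deriv)
  then have "(of_nat (Suc j) :: 'a) * fls_residue (inverse a ^ k * fls_deriv a) = 0"
    by (simp only: fls_residue_fls_const_times mult_minus_left neg_equal_0_iff_equal)
  then show ?thesis using False by (simp del: of_nat_Suc)
qed

lemma fps_to_fls_sum: "fps_to_fls (sum f S) = (\<Sum>x\<in>S. fps_to_fls (f x))"
  by (induction S rule: infinite_finite_induct) auto

lemma fps_split_at:
  fixes H :: "'a::comm_ring_1 fps"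
  shows "H = (\<Sum>m<n. fps_const (H $ m) * fps_X ^ m) + fps_shift n H * fps_X ^ n"
proof (rule fps_ext)
  fix i
  have "(\<Sum>m<n. fps_const (H $ m) * fps_X ^ m) $ i = (\<Sum>m<n. if i = m then H $ m else 0)"
    unfolding fps_sum_nth by (intro sum.cong) auto
  then show "H $ i = ((\<Sum>m<n. fps_const (H $ m) * fps_X ^ m) + fps_shift n H * fps_X ^ n) $ i"
    by (simp add: fps_X_power_mult_right_nth)
qed

(* The part of H divisible by X^n
   contributes a power series (no residue); each monomial X^m with m < n
   contributes res(A^(-(n-m)) A'). *)
lemma lagrange_residue:
  fixes A H :: "'a::field_char_0 fps"
  assumes A0: "A $ 0 = 0" and A1: "A $ 1 \<noteq> 0" and n: "n \<ge> 1"
  shows "fls_residue (inverse (fps_to_fls A) ^ n * fps_to_fls (H oo A) * fps_to_fls (fps_deriv A))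
           = H $ (n - 1)"
proof -
  define a where "a = fps_to_fls A"
  define a' where "a' = fps_to_fls (fps_deriv A)"
  define T where "T = (\<Sum>m<n. fps_const (H $ m) * fps_X ^ m)"
  define Q where "Q = fps_shift n H"
  have HT: "H = T + Q * fps_X ^ n" unfolding T_def Q_def by (rule fps_split_at)
  have "subdegree A = 1" using A0 A1 by (intro subdegreeI) auto
  then have sa: "fls_subdegree a = 1" unfolding a_def by (simp add: fls_subdegree_fls_to_fps)
  then have a0: "a \<noteq> 0" by auto
  have cancel: "inverse a ^ n * a ^ m = inverse a ^ (n - m)" if "m \<le> n" for m
  proof -
    have "inverse a ^ n = inverse a ^ (n - m) * inverse a ^ m"
      using that by (simp add: power_add[symmetric])
    then show ?thesis using a0 by (simp add: mult.assoc power_mult_distrib[symmetric])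
  qed
  have "H oo A = (T oo A) + ((Q * fps_X ^ n) oo A)"
    by (subst HT) (rule fps_compose_add_distrib)
  also have "\<dots> = (\<Sum>m<n. fps_const (H $ m) * A ^ m) + (Q oo A) * A ^ n"
    unfolding T_def by (simp add: fps_compose_sum_distrib fps_compose_mult_distrib[OF A0]
                  fps_compose_power[OF A0, symmetric] A0)
  finally have "fps_to_fls (H oo A) = (\<Sum>m<n. fls_const (H $ m) * a ^ m) + fps_to_fls (Q oo A) * a ^ n"
    unfolding a_def by (simp add: fls_times_fps_to_fls fps_to_fls_power fps_to_fls_sum)
  then have "inverse a ^ n * fps_to_fls (H oo A) * a' =
     (\<Sum>m<n. fls_const (H $ m) * (inverse a ^ n * a ^ m * a')) + fps_to_fls (Q oo A) * (inverse a ^ n * a ^ n) * a'"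
    by (simp add: algebra_simps sum_distrib_left sum_distrib_right)
  also have "\<dots> = (\<Sum>m<n. fls_const (H $ m) * (inverse a ^ (n - m) * a')) + fps_to_fls ((Q oo A) * fps_deriv A)"
    using cancel by (simp add: a'_def fls_times_fps_to_fls)
  finally have "fls_residue (inverse a ^ n * fps_to_fls (H oo A) * a') =
        (\<Sum>m<n. H $ m * fls_residue (inverse a ^ (n - m) * a'))"
    unfolding fls_residue_def by (simp add: fls_nth_sum)
  also have "\<dots> = (\<Sum>m<n. if m = n - 1 then H $ m else 0)"
  proof (rule sum.cong)
    fix m assume m: "m \<in> {..<n}"
    have "fls_residue (inverse a ^ (n - m) * a') = (if n - m = 1 then 1 else 0)"
      unfolding a'_def fls_deriv_fps_to_fls[symmetric] a_def[symmetric]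
      by (rule fls_residue_inverse_power_times_deriv[OF sa]) (use m in auto)
    then show "H $ m * fls_residue (inverse a ^ (n - m) * a') = (if m = n - 1 then H $ m else 0)"
      using m by auto
  qed simp
  also have "\<dots> = H $ (n - 1)" using n by simp
  finally show ?thesis unfolding a_def a'_def .
qed

lemma reverse_linear_coeff:
  fixes F A :: "'a::comm_ring_1 fps"
  assumes "F $ 0 = 0" and "A $ 0 = 0" and "F oo A = fps_X"
  shows "F $ 1 * A $ 1 = 1"
proof -
  have "(F oo A) $ 1 = F $ 1 * A $ 1" by (simp add: fps_compose_nth assms(1))
  then show ?thesis using assms(3) by simp
qed

(* If F o A = X then (F / X) o A = X / A, i.e. (Fs o A) * (A / X) = 1. *)
lemma inverse_shift_compose_reverse:
  fixes F A :: "'a::field fps"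
  assumes F0: "F $ 0 = 0" and A0: "A $ 0 = 0" and FA: "F oo A = fps_X"
  shows "inverse (fps_shift 1 F) oo A = fps_shift 1 A"
proof -
  define Fs where "Fs = fps_shift 1 F"
  define B where "B = fps_shift 1 A"
  have FFs: "F = Fs * fps_X" by (rule fps_ext) (auto simp: Fs_def F0)
  have AB: "A = B * fps_X" by (rule fps_ext) (auto simp: B_def A0)
  have "F $ 1 \<noteq> 0" using reverse_linear_coeff[OF F0 A0 FA] by auto
  then have Fs0: "Fs $ 0 \<noteq> 0" by (simp add: Fs_def)
  have "fps_X = (Fs oo A) * A"
    using FA FFs by (simp add: fps_compose_mult_distrib[OF A0] A0)
  then have "1 * fps_X = ((Fs oo A) * B) * fps_X"
    using AB by (simp add: mult.assoc)
  then have "(Fs oo A) * B = 1" by (subst (asm) mult_right_cancel) simp_all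
  then have "inverse (Fs oo A) = B" by (rule fps_inverse_unique)
  then show ?thesis unfolding Fs_def B_def using fps_inverse_compose[OF A0 Fs0] by (simp add: Fs_def)
qed

(* Apply the residue formula with H = Fs^(-n), for
   which H o A = (A / X)^n, so that A^(-n) * (H o A) = X^(-n). *)
lemma lagrange_inversion:
  fixes F A :: "'a::field_char_0 fps"
  assumes F0: "F $ 0 = 0" and A0: "A $ 0 = 0" and FA: "F oo A = fps_X" and n: "n \<ge> 1"
  shows "of_nat n * A $ n = (inverse (fps_shift 1 F) ^ n) $ (n - 1)"
proof -
  define H where "H = inverse (fps_shift 1 F) ^ n"
  define b where "b = fps_to_fls (fps_shift 1 A)"
  have A1: "A $ 1 \<noteq> 0" using reverse_linear_coeff[OF F0 A0 FA] by auto
  have AB: "A = fps_shift 1 A * fps_X" by (rule fps_ext) (auto simp: A0)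
  have HA: "H oo A = fps_shift 1 A ^ n"
    unfolding H_def
    by (simp only: fps_compose_power[OF A0, symmetric] inverse_shift_compose_reverse[OF F0 A0 FA])
  have "b \<noteq> 0" using A1 by (auto simp: b_def fps_eq_iff)
  then have "inverse b ^ n * b ^ n = 1" by (simp add: power_mult_distrib[symmetric])
  then have "inverse (fps_to_fls A) ^ n * fps_to_fls (H oo A) = fls_X_inv ^ n"
    unfolding HA by (subst (1) AB) (simp add: b_def fls_times_fps_to_fls fps_to_fls_power
                     fls_inverse_X power_mult_distrib mult_ac)
  then have "H $ (n - 1) = fls_residue (fls_X_inv ^ n * fps_to_fls (fps_deriv A))"
    using lagrange_residue[OF A0 A1 n, of H] by simp
  also have "\<dots> = fps_deriv A $ (n - 1)"
  proof -
    have "nat (int n - 1) = n - 1" using n by simp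
    then show ?thesis using n by (simp add: fls_X_inv_power_times_conv_shift)
  qed
  also have "\<dots> = of_nat n * A $ n" using n by simp
  finally show ?thesis unfolding H_def by simp
qed

section \<open>The composita as coefficients of powers\<close>

lemma finite_compositions: "finite (compositions m j)"
proof (rule finite_subset)
  show "compositions m j \<subseteq> {xs. set xs \<subseteq> {0..m} \<and> length xs = j}"
    unfolding compositions_def by (auto simp: member_le_sum_list)
  show "finite {xs. set xs \<subseteq> {0..m} \<and> length xs = j}"
    by (rule finite_lists_length_eq) simp
qed

lemma compositions_0: "compositions m 0 = (if m = 0 then {[]} else {})"
  unfolding compositions_def by auto

lemma compositions_Suc:
  "compositions m (Suc j) = (\<lambda>(l, xs). l # xs) ` (SIGMA l:{1..m}. compositions (m - l) j)"
proof (intro equalityI subsetI)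
  fix xs assume xs: "xs \<in> compositions m (Suc j)"
  then obtain l ys where xs': "xs = l # ys" unfolding compositions_def by (cases xs) auto
  with xs have "l \<in> {1..m}" "ys \<in> compositions (m - l) j"
    unfolding compositions_def by auto
  then show "xs \<in> (\<lambda>(l, xs). l # xs) ` (SIGMA l:{1..m}. compositions (m - l) j)"
    using xs' by force
next
  fix xs assume "xs \<in> (\<lambda>(l, xs). l # xs) ` (SIGMA l:{1..m}. compositions (m - l) j)"
  then show "xs \<in> compositions m (Suc j)"
    unfolding compositions_def by auto
qed

lemma composita_eq_power_nth:
  fixes F :: "'a::comm_semiring_1 fps"
  assumes F0: "F $ 0 = 0"
  shows "composita F m j = (F ^ j) $ m"
proof (induction j arbitrary: m)
  case 0
  then show ?case by (simp add: composita_def compositions_0)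
next
  case (Suc j)
  have inj: "inj_on (\<lambda>(l, xs). l # xs) (SIGMA l:{1..m}. compositions (m - l) j)"
    by (auto simp: inj_on_def)
  have "composita F m (Suc j) =
      (\<Sum>p\<in>(SIGMA l:{1..m}. compositions (m - l) j).
          (\<lambda>xs. \<Prod>i<length xs. F $ (xs ! i)) ((\<lambda>(l, xs). l # xs) p))"
    unfolding composita_def compositions_Suc by (rule sum.reindex[OF inj, unfolded comp_def])
  also have "\<dots> = (\<Sum>l=1..m. \<Sum>xs\<in>compositions (m - l) j. F $ l * (\<Prod>i<length xs. F $ (xs ! i)))"
    by (subst sum.Sigma) (auto simp: finite_compositions prod.lessThan_Suc_shift
                               simp del: prod.lessThan_Suc intro!: sum.cong)
  also have "\<dots> = (\<Sum>l=1..m. F $ l * composita F (m - l) j)"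
    by (simp add: composita_def sum_distrib_left)
  also have "\<dots> = (\<Sum>l=1..m. F $ l * (F ^ j) $ (m - l))"
    by (simp add: Suc.IH)
  also have "\<dots> = (\<Sum>l=0..m. F $ l * (F ^ j) $ (m - l))"
    by (simp add: sum.atLeast_Suc_atMost F0)
  also have "\<dots> = (F ^ Suc j) $ m"
    by (simp add: fps_mult_nth)
  finally show ?case .
qed

lemma composita_shift_power_nth:
  fixes F :: "'a::comm_semiring_1 fps"
  assumes F0: "F $ 0 = 0"
  shows "(fps_shift 1 F ^ j) $ m = composita F (m + j) j"
proof -
  have "F = fps_shift 1 F * fps_X" by (rule fps_ext) (auto simp: F0)
  then have "F ^ j = fps_shift 1 F ^ j * fps_X ^ j" by (metis power_mult_distrib)
  then show ?thesis by (simp add: composita_eq_power_nth[OF F0] fps_X_power_mult_right_nth)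
qed

section \<open>Binomial expansions\<close>

lemma fps_minus_power_nth:
  fixes g :: "'a::comm_ring_1 fps"
  shows "((- g) ^ k) $ i = (-1) ^ k * (g ^ k) $ i"
proof -
  have "(-1 :: 'a fps) ^ k = fps_const ((-1) ^ k)"
    by (metis fps_const_1_eq_1 fps_const_neg fps_const_power)
  then show ?thesis by (simp only: power_minus[of g] fps_mult_left_const_nth)
qed

lemma one_minus_power_nth:
  fixes f :: "'a::comm_ring_1 fps"
  shows "((1 - f) ^ k) $ i = (\<Sum>j\<le>k. (-1) ^ j * of_nat (k choose j) * (f ^ j) $ i)"
proof -
  have "(1 - f) ^ k = (- f + 1) ^ k" by simp
  also have "\<dots> = (\<Sum>j\<le>k. of_nat (k choose j) * (- f) ^ j)"
    by (simp only: binomial_ring power_one mult_1_right)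
  finally show ?thesis
    by (simp add: fps_sum_nth fps_minus_power_nth fps_of_nat[symmetric] mult_ac del: fps_of_nat)
qed

lemma gbinomial_minus_of_nat:
  assumes "n \<ge> 1"
  shows "((- of_nat n :: 'a::field_char_0) gchoose k) = (-1) ^ k * of_nat ((n + k - 1) choose k)"
proof -
  have "(of_nat n + of_nat k - 1 :: 'a) = of_nat (n + k - 1)" using assms by (simp add: of_nat_diff)
  then show ?thesis by (simp add: gbinomial_minus binomial_gbinomial)
qed

lemma inverse_power_nth:
  fixes f :: "'a::field_char_0 fps"
  assumes f0: "f $ 0 = 1" and n: "n \<ge> 1"
  shows "(inverse f ^ n) $ m = (\<Sum>k=0..m. of_nat ((n + k - 1) choose k) * ((1 - f) ^ k) $ m)"
proof -
  define G where "G = f - 1"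
  have G0: "G $ 0 = 0" using f0 by (simp add: G_def)
  have "(1 + fps_X) oo G = f"
    by (simp only: fps_compose_add_distrib fps_compose_1 fps_X_fps_compose_startby0[OF G0])
       (simp add: G_def)
  then have "f ^ n = ((1 + fps_X) ^ n) oo G" by (metis fps_compose_power[OF G0])
  then have "inverse f ^ n = inverse (((1 + fps_X) ^ n) oo G)"
    by (simp add: fps_inverse_power[symmetric])
  also have "\<dots> = fps_binomial (- of_nat n) oo G"
    by (simp add: fps_inverse_compose[OF G0, symmetric] fps_binomial_minus_of_nat)
  finally have "(inverse f ^ n) $ m = (\<Sum>k=0..m. (- of_nat n gchoose k) * (G ^ k) $ m)"
    by (simp add: fps_compose_nth)
  also have "\<dots> = (\<Sum>k=0..m. of_nat ((n + k - 1) choose k) * ((- G) ^ k) $ m)"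
    by (simp add: gbinomial_minus_of_nat[OF n] fps_minus_power_nth mult_ac)
  finally show ?thesis by (simp add: G_def)
qed

section \<open>The reversion formula\<close>

lemma one_minus_shift_power_nth:
  fixes F :: "'a::comm_ring_1 fps"
  assumes F0: "F $ 0 = 0" and m: "m \<ge> 1"
  shows "((1 - fps_shift 1 F) ^ k) $ m =
           (\<Sum>j=1..k. (-1) ^ j * of_nat (k choose j) * composita F (m + j) j)"
proof -
  have "((1 - fps_shift 1 F) ^ k) $ m = (\<Sum>j=0..k. (-1) ^ j * of_nat (k choose j) * composita F (m + j) j)"
    unfolding one_minus_power_nth composita_shift_power_nth[OF F0] atMost_atLeast0 ..
  also have "composita F m 0 = 0" using m by (simp add: composita_eq_power_nth[OF F0])
  then have "(\<Sum>j=0..k. (-1) ^ j * of_nat (k choose j) * composita F (m + j) j) =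
             (\<Sum>j=1..k. (-1) ^ j * of_nat (k choose j) * composita F (m + j) j)"
    by (simp add: sum.atLeast_Suc_atMost)
  finally show ?thesis .
qed

lemma inverse_shift_power_composita:
  fixes F :: "'a::field_char_0 fps"
  assumes F0: "F $ 0 = 0" and F1: "F $ 1 = 1" and n: "n > 1"
  shows "(inverse (fps_shift 1 F) ^ n) $ (n - 1) =
           (\<Sum>k=1..n-1. of_nat ((n + k - 1) choose (n - 1)) *
              (\<Sum>j=1..k. (-1) ^ j * of_nat (k choose j) * composita F (n + j - 1) j))"
proof -
  let ?c = "\<lambda>k. of_nat ((n + k - 1) choose k) * ((1 - fps_shift 1 F) ^ k) $ (n - 1) :: 'a"
  have "fps_shift 1 F $ 0 = 1" using F1 by simp
  then have "(inverse (fps_shift 1 F) ^ n) $ (n - 1) = (\<Sum>k=0..n-1. ?c k)"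
    using n by (intro inverse_power_nth) simp_all
  also have "\<dots> = (\<Sum>k=1..n-1. ?c k)"
    using n by (simp add: sum.atLeast_Suc_atMost)
  also have "\<dots> = (\<Sum>k=1..n-1. of_nat ((n + k - 1) choose (n - 1)) *
              (\<Sum>j=1..k. (-1) ^ j * of_nat (k choose j) * composita F (n + j - 1) j))"
  proof (rule sum.cong)
    fix k assume "k \<in> {1..n-1}"
    have "(n + k - 1) choose k = (n + k - 1) choose (n - 1)"
      using binomial_symmetric[of k "n + k - 1"] n by simp
    moreover have "((1 - fps_shift 1 F) ^ k) $ (n - 1) =
        (\<Sum>j=1..k. (-1) ^ j * of_nat (k choose j) * composita F (n - 1 + j) j)"
      using n by (intro one_minus_shift_power_nth[OF F0]) simp
    moreover have "n - 1 + j = n + j - 1" for j using n by simp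
    ultimately show "?c k = of_nat ((n + k - 1) choose (n - 1)) *
              (\<Sum>j=1..k. (-1) ^ j * of_nat (k choose j) * composita F (n + j - 1) j)"
      by simp
  qed simp
  finally show ?thesis .
qed

theorem corollary4:
  fixes F A :: "'a::field_char_0 fps"
  assumes "fps_nth F 0 = 0" and "fps_nth F 1 = 1"
    and "fps_nth A 0 = 0" and "fps_compose F A = fps_X"
  shows "fps_nth A 1 = 1 \<and>
    (\<forall>n::nat. n > 1 \<longrightarrow>
      fps_nth A n = (1 / of_nat n) * (\<Sum>k=1..n-1. of_nat ((n + k - 1) choose (n - 1)) *
         (\<Sum>j=1..k. (-1) ^ j * of_nat (k choose j) * composita F (n + j - 1) j)))"
proof (intro conjI allI impI)
  show "A $ 1 = 1" using reverse_linear_coeff[OF assms(1,3,4)] assms(2) by simp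
next
  fix n :: nat assume n: "n > 1"
  have "of_nat n * A $ n = (inverse (fps_shift 1 F) ^ n) $ (n - 1)"
    using n by (intro lagrange_inversion[OF assms(1,3,4)]) simp
  also have "\<dots> = (\<Sum>k=1..n-1. of_nat ((n + k - 1) choose (n - 1)) *
         (\<Sum>j=1..k. (-1) ^ j * of_nat (k choose j) * composita F (n + j - 1) j))"
    by (rule inverse_shift_power_composita[OF assms(1,2) n])
  finally show "A $ n = (1 / of_nat n) * (\<Sum>k=1..n-1. of_nat ((n + k - 1) choose (n - 1)) *
         (\<Sum>j=1..k. (-1) ^ j * of_nat (k choose j) * composita F (n + j - 1) j))"
    using n by (simp add: field_simps)
qed

end
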